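(* Let $\mathcal{I}$ be an ideal on $\mathbb{N}$ with the Baire property. A Banach space $X$ contains no (isomorphic) copy of $c_0$ if and only if for each series $\sum x_n$ in $X$ which is not unconditionally convergent the set $A(\mathcal{I},(x_n))=\left\{t \in \{0,1\}^{\mathbb{N}} : \left(\sum_{i=1}^n t(i)x_{i}\right)_n \text{ is } \mathcal{I}\text{-bounded}\right\}$ is meager in $\{0,1\}^{\mathbb{N}}$.
   Context: An ideal on $\mathbb{N}$ is a family $\mathcal{I}\subset \mathcal{P}(\mathbb{N})$ with $\emptyset\in\mathcal{I}$, closed under finite unions and subsets, with $\mathbb{N}\notin\mathcal{I}$ and containing all finite subsets of $\mathbb{N}$. Identifying $\mathcal{P}(\mathbb{N})$ with $\{0,1\}^{\mathbb{N}}$ (product topology of discrete spaces), $\mathcal{I}$ has the Baire property if it is the symmetric difference of an open set and a meager set. A sequence $(y_n)$ in a normed space is $\mathcal{I}$-bounded if there is $M>0$ with $\{n\in\mathbb{N} : \|y_n\|>M\}\in\mathcal{I}$. *)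

theory Defs
  imports "HOL-Analysis.Analysis"
begin

text \<open>Cantor space: the type nat \<Rightarrow> bool with the product topology
  (library instance from Function_Topology; bool carries its discrete order topology).\<close>

definition nowhere_dense :: "'a::topological_space set \<Rightarrow> bool" where
  "nowhere_dense S \<longleftrightarrow> interior (closure S) = {}"

definition meager :: "'a::topological_space set \<Rightarrow> bool" where
  "meager S \<longleftrightarrow> (\<exists>F::nat \<Rightarrow> 'a set. (\<forall>n. nowhere_dense (F n)) \<and> S \<subseteq> (\<Union>n. F n))"

definition has_baire_property :: "'a::topological_space set \<Rightarrow> bool" where
  "has_baire_property S \<longleftrightarrow> (\<exists>U M. open U \<and> meager M \<and> S = (U - M) \<union> (M - U))"

definition ideal_on_nat :: "nat set set \<Rightarrow> bool" where
  "ideal_on_nat I \<longleftrightarrow> {} \<in> I \<and> (\<forall>A\<in>I. \<forall>B\<in>I. A \<union> B \<in> I)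
     \<and> (\<forall>A\<in>I. \<forall>B. B \<subseteq> A \<longrightarrow> B \<in> I) \<and> UNIV \<notin> I \<and> (\<forall>A. finite A \<longrightarrow> A \<in> I)"

definition ideal_as_cantor :: "nat set set \<Rightarrow> (nat \<Rightarrow> bool) set" where
  "ideal_as_cantor I = {t. {n. t n} \<in> I}"

definition I_bounded :: "nat set set \<Rightarrow> (nat \<Rightarrow> 'a::real_normed_vector) \<Rightarrow> bool" where
  "I_bounded I y \<longleftrightarrow> (\<exists>M>0. {n. norm (y n) > M} \<in> I)"

definition unconditionally_convergent :: "(nat \<Rightarrow> 'a::real_normed_vector) \<Rightarrow> bool" where
  "unconditionally_convergent x \<longleftrightarrow> (\<forall>\<sigma>. bij \<sigma> \<longrightarrow> summable (x \<circ> \<sigma>))"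

definition A_set :: "nat set set \<Rightarrow> (nat \<Rightarrow> 'a::real_normed_vector) \<Rightarrow> (nat \<Rightarrow> bool) set" where
  "A_set I x = {t. I_bounded I (\<lambda>n. \<Sum>i\<le>n. (if t i then 1 else 0) *\<^sub>R x i)}"

definition c0 :: "(nat \<Rightarrow> real) set" where
  "c0 = {f. f \<longlonglongrightarrow> 0}"

definition sup_norm :: "(nat \<Rightarrow> real) \<Rightarrow> real" where
  "sup_norm f = (SUP n. \<bar>f n\<bar>)"

definition contains_c0 :: "'a::real_normed_vector itself \<Rightarrow> bool" where
  "contains_c0 _ \<longleftrightarrow> (\<exists>(T::(nat \<Rightarrow> real) \<Rightarrow> 'a) m M. 0 < m \<and> 0 < M
     \<and> (\<forall>f\<in>c0. \<forall>g\<in>c0. \<forall>a b. T (\<lambda>n. a * f n + b * g n) = a *\<^sub>R T f + b *\<^sub>R T g)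
     \<and> (\<forall>f\<in>c0. m * sup_norm f \<le> norm (T f) \<and> norm (T f) \<le> M * sup_norm f))"

end

theory Submission
  imports Defs
begin

text \<open>An ideal with the Baire property is meager, by a 0-1 argument: otherwise it would be comeager
  in some cylinder of length \<open>n\<close>, and so would its image under the homeomorphism that flips all
  bits from position \<open>n\<close> on; a point in both gives two members of the ideal which together with
  \<open>{..<n}\<close> cover \<open>\<nat>\<close>. By Talagrand's characterization of meager sets there are then finite
  intervals partitioning \<open>\<nat>\<close> such that no member of the ideal contains infinitely many of them.

  If the space contains no copy of \<open>c\<^sub>0\<close>, the Bessaga-Pelczynski theorem shows that a series which
  is not unconditionally convergent has arbitrarily large finite subsums beyond every index. So
  every cylinder contains a subcylinder on which the partial sums are large throughout one of the
  intervals, and \<open>A(I, (x\<^sub>n))\<close> is covered by countably many nowhere dense sets. Conversely, the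
  images of the unit vectors under an embedding of \<open>c\<^sub>0\<close> form a series with bounded partial sums
  whose terms do not tend to zero, and for it \<open>A(I, (x\<^sub>n))\<close> is the whole Cantor space.\<close>

section \<open>Cylinders and category in the Cantor space\<close>

definition cylinder :: "(nat \<Rightarrow> bool) \<Rightarrow> nat \<Rightarrow> (nat \<Rightarrow> bool) set" where
  "cylinder s n = {t. \<forall>i<n. t i = s i}"

lemma cylinder_self [simp]: "s \<in> cylinder s n"
  by (simp add: cylinder_def)

lemma cylinder_subset: "t \<in> cylinder s n \<Longrightarrow> n \<le> m \<Longrightarrow> cylinder t m \<subseteq> cylinder s n"
  by (auto simp: cylinder_def)

lemma open_cylinder: "open (cylinder s n)"
proof -
  have "open {t::nat \<Rightarrow> bool. \<forall>i\<in>{..<n}. t (id i) \<in> {s i}}"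
    by (rule product_topology_basis') (auto simp: open_discrete)
  moreover have "{t::nat \<Rightarrow> bool. \<forall>i\<in>{..<n}. t (id i) \<in> {s i}} = cylinder s n"
    by (auto simp: cylinder_def)
  ultimately show ?thesis
    by simp
qed

lemma open_contains_cylinder:
  assumes "open U" "s \<in> U"
  obtains n where "cylinder s n \<subseteq> U"
proof -
  have "openin (product_topology (\<lambda>i. euclidean) UNIV) U"
    using assms(1) by (simp add: euclidean_product_topology)
  from product_topology_open_contains_basis[OF this assms(2)]
  have "\<exists>X. s \<in> (\<Pi>\<^sub>E i\<in>UNIV. X i) \<and> finite {i. X i \<noteq> UNIV} \<and> (\<Pi>\<^sub>E i\<in>UNIV. X i) \<subseteq> U"
    by auto
  then obtain X where X: "s \<in> (\<Pi>\<^sub>E i\<in>UNIV. X i)" "finite {i. X i \<noteq> UNIV}"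
    "(\<Pi>\<^sub>E i\<in>UNIV. X i) \<subseteq> U"
    by blast
  obtain n where n: "{i. X i \<noteq> UNIV} \<subseteq> {..<n}"
    using finite_nat_bounded[OF X(2)] by blast
  have "cylinder s n \<subseteq> (\<Pi>\<^sub>E i\<in>UNIV. X i)"
  proof
    fix t assume t: "t \<in> cylinder s n"
    have "t i \<in> X i" for i
    proof (cases "X i = UNIV")
      case False
      with n t have "t i = s i"
        by (auto simp: cylinder_def)
      then show ?thesis
        using PiE_mem[OF X(1)] by simp
    qed simp
    then show "t \<in> (\<Pi>\<^sub>E i\<in>UNIV. X i)"
      by (simp add: PiE_iff)
  qed
  then have "cylinder s n \<subseteq> U"
    using X(3) by (rule subset_trans)
  then show ?thesis
    by (rule that)
qed

lemma nowhere_dense_iff_cylinders: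
  "nowhere_dense S \<longleftrightarrow> (\<forall>s n. \<exists>t m. n < m \<and> t \<in> cylinder s n \<and> cylinder t m \<inter> S = {})"
proof
  assume S: "nowhere_dense S"
  show "\<forall>s n. \<exists>t m. n < m \<and> t \<in> cylinder s n \<and> cylinder t m \<inter> S = {}"
  proof (intro allI)
    fix s n
    have "\<not> cylinder s n \<subseteq> closure S"
    proof
      assume "cylinder s n \<subseteq> closure S"
      then have "cylinder s n \<subseteq> interior (closure S)"
        using open_cylinder by (rule interior_maximal)
      with S show False
        using cylinder_self[of s n] by (auto simp: nowhere_dense_def)
    qed
    then obtain t where t: "t \<in> cylinder s n" "t \<notin> closure S"
      by blast
    moreover have "open (- closure S)"
      by (simp add: open_Compl)
    ultimately obtain m where "cylinder t m \<subseteq> - closure S"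
      using open_contains_cylinder[of "- closure S" t] by blast
    moreover have "cylinder t (max m (Suc n)) \<subseteq> cylinder t m"
      by (rule cylinder_subset) simp_all
    ultimately have "cylinder t (max m (Suc n)) \<inter> S = {}"
      using closure_subset by blast
    with t(1) show "\<exists>t m. n < m \<and> t \<in> cylinder s n \<and> cylinder t m \<inter> S = {}"
      by (intro exI[of _ t] exI[of _ "max m (Suc n)"]) auto
  qed
next
  assume S: "\<forall>s n. \<exists>t m. n < m \<and> t \<in> cylinder s n \<and> cylinder t m \<inter> S = {}"
  show "nowhere_dense S"
    unfolding nowhere_dense_def
  proof (rule equals0I)
    fix s assume "s \<in> interior (closure S)"
    then obtain n where n: "cylinder s n \<subseteq> interior (closure S)"
      using open_contains_cylinder[OF open_interior] by blast
    obtain t m where tm: "n < m" "t \<in> cylinder s n" "cylinder t m \<inter> S = {}"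
      using S by blast
    have "cylinder t m \<inter> closure S = {}"
      using tm(3) open_cylinder by (simp add: open_Int_closure_eq_empty)
    moreover have "t \<in> closure S"
      using tm(2) n interior_subset by blast
    ultimately show False
      using cylinder_self[of t m] by blast
  qed
qed

lemma nowhere_dense_Un: "nowhere_dense S \<Longrightarrow> nowhere_dense T \<Longrightarrow> nowhere_dense (S \<union> T)"
  unfolding nowhere_dense_def by (simp add: interior_closed_Un_empty_interior)

lemma meagerI: "(\<And>n::nat. nowhere_dense (F n)) \<Longrightarrow> S \<subseteq> (\<Union>n. F n) \<Longrightarrow> meager S"
  unfolding meager_def by blast

lemma nowhere_dense_imp_meager: "nowhere_dense S \<Longrightarrow> meager S"
  by (rule meagerI[of "\<lambda>_. S"]) simp_all

lemma meager_subset: "meager S \<Longrightarrow> T \<subseteq> S \<Longrightarrow> meager T"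
  unfolding meager_def by blast

lemma meager_UN:
  assumes "\<And>k::nat. meager (S k)"
  shows "meager (\<Union>k. S k)"
proof -
  have "\<forall>k. \<exists>F::nat \<Rightarrow> 'a::topological_space set. (\<forall>j. nowhere_dense (F j)) \<and> S k \<subseteq> (\<Union>j. F j)"
    using assms by (simp add: meager_def)
  from choice[OF this] obtain F :: "nat \<Rightarrow> nat \<Rightarrow> 'a set"
    where F: "\<And>k j. nowhere_dense (F k j)" "\<And>k. S k \<subseteq> (\<Union>j. F k j)"
    by blast
  define G where "G n = case_prod F (prod_decode n)" for n
  have "nowhere_dense (G n)" for n
    using F(1) by (simp add: G_def split_beta)
  moreover have "(\<Union>k. S k) \<subseteq> (\<Union>n. G n)"
  proof
    fix x assume "x \<in> (\<Union>k. S k)"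
    then obtain k j where "x \<in> F k j"
      using F(2) by blast
    then have "x \<in> G (prod_encode (k, j))"
      by (simp add: G_def)
    then show "x \<in> (\<Union>n. G n)"
      by blast
  qed
  ultimately show ?thesis
    by (rule meagerI)
qed

lemma meager_Un: "meager S \<Longrightarrow> meager T \<Longrightarrow> meager (S \<union> T)"
proof -
  assume "meager S" "meager T"
  then obtain F G :: "nat \<Rightarrow> 'a::topological_space set"
    where F: "\<And>n. nowhere_dense (F n)" "S \<subseteq> (\<Union>n. F n)"
      and G: "\<And>n. nowhere_dense (G n)" "T \<subseteq> (\<Union>n. G n)"
    unfolding meager_def by blast
  show ?thesis
  proof (rule meagerI)
    show "nowhere_dense (F n \<union> G n)" for n
      using F(1) G(1) by (rule nowhere_dense_Un)
    show "S \<union> T \<subseteq> (\<Union>n. F n \<union> G n)"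
      using F(2) G(2) by blast
  qed
qed

lemma meager_interior_empty:
  fixes S :: "'a::topological_space set"
  assumes "completely_metrizable_space (euclidean :: 'a topology)
      \<or> locally_compact_space (euclidean :: 'a topology) \<and> regular_space (euclidean :: 'a topology)"
    and "meager S"
  shows "interior S = {}"
proof -
  obtain F :: "nat \<Rightarrow> 'a set" where F: "\<And>n. nowhere_dense (F n)" "S \<subseteq> (\<Union>n. F n)"
    using assms(2) unfolding meager_def by blast
  have "euclidean interior_of (\<Union>n. closure (F n)) = {}"
    by (rule Baire_category_alt[OF assms(1)]) (auto simp: F(1)[unfolded nowhere_dense_def])
  moreover have "S \<subseteq> (\<Union>n. closure (F n))"
    using F(2) closure_subset by blast
  then have "interior S \<subseteq> interior (\<Union>n. closure (F n))"
    by (rule interior_mono)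
  ultimately show ?thesis
    by simp
qed

lemma Hausdorff_space_t2_euclidean: "Hausdorff_space (euclidean :: 'a::t2_space topology)"
  by (simp add: Hausdorff_space_def disjnt_def) (meson hausdorff)

lemma meager_Cantor_interior_empty:
  "meager (S :: (nat \<Rightarrow> bool) set) \<Longrightarrow> interior S = {}"
proof (rule meager_interior_empty[OF disjI2])
  have "compact_space (euclidean :: (nat \<Rightarrow> bool) topology)"
    unfolding euclidean_product_topology[symmetric] compact_space_product_topology
    by (simp add: compact_space_def finite_imp_compact)
  then show "locally_compact_space (euclidean :: (nat \<Rightarrow> bool) topology)
      \<and> regular_space (euclidean :: (nat \<Rightarrow> bool) topology)"
    by (simp add: compact_imp_locally_compact_space compact_Hausdorff_imp_regular_space
        Hausdorff_space_t2_euclidean Hausdorff_space_product_topology flip: euclidean_product_topology)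
qed

lemma meager_avoids_cylinder:
  assumes "meager (M :: (nat \<Rightarrow> bool) set)"
  shows "\<exists>t\<in>cylinder s n. t \<notin> M"
proof (rule ccontr)
  assume "\<not> (\<exists>t\<in>cylinder s n. t \<notin> M)"
  then have "cylinder s n \<subseteq> interior M"
    using open_cylinder by (intro interior_maximal) auto
  then show False
    using meager_Cantor_interior_empty[OF assms] cylinder_self[of s n] by blast
qed

section \<open>Meager ideals\<close>

definition flip_tail :: "nat \<Rightarrow> (nat \<Rightarrow> bool) \<Rightarrow> nat \<Rightarrow> bool" where
  "flip_tail n t = (\<lambda>i. if i < n then t i else \<not> t i)"

lemma flip_tail_in_cylinder_iff: "flip_tail n t \<in> cylinder s m \<longleftrightarrow> t \<in> cylinder (flip_tail n s) m"
proof -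
  have "flip_tail n t i = s i \<longleftrightarrow> t i = flip_tail n s i" for i
    by (auto simp: flip_tail_def)
  then show ?thesis
    by (simp add: cylinder_def)
qed

lemma nowhere_dense_vimage_flip_tail:
  assumes "nowhere_dense S"
  shows "nowhere_dense (flip_tail n -` S)"
  unfolding nowhere_dense_iff_cylinders
proof (intro allI)
  fix s k
  obtain t m where tm: "k < m" "t \<in> cylinder (flip_tail n s) k" "cylinder t m \<inter> S = {}"
    using assms unfolding nowhere_dense_iff_cylinders by blast
  have "flip_tail n t \<in> cylinder s k"
    using tm(2) by (simp add: flip_tail_in_cylinder_iff)
  moreover have "cylinder (flip_tail n t) m \<inter> flip_tail n -` S = {}"
  proof (rule equals0I)
    fix r assume "r \<in> cylinder (flip_tail n t) m \<inter> flip_tail n -` S"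
    then have "flip_tail n r \<in> cylinder t m \<inter> S"
      by (simp add: flip_tail_in_cylinder_iff)
    with tm(3) show False
      by blast
  qed
  ultimately show "\<exists>t m. k < m \<and> t \<in> cylinder s k \<and> cylinder t m \<inter> flip_tail n -` S = {}"
    using tm(1) by blast
qed

lemma meager_vimage_flip_tail:
  assumes "meager M"
  shows "meager (flip_tail n -` M)"
proof -
  obtain F where F: "\<And>k::nat. nowhere_dense (F k)" "M \<subseteq> (\<Union>k. F k)"
    using assms unfolding meager_def by blast
  show ?thesis
  proof (rule meagerI)
    show "nowhere_dense (flip_tail n -` F k)" for k
      using F(1) by (rule nowhere_dense_vimage_flip_tail)
    show "flip_tail n -` M \<subseteq> (\<Union>k. flip_tail n -` F k)"
      using F(2) by blast
  qed
qed

lemma ideal_as_cantor_meager: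
  assumes I: "ideal_on_nat I" and "has_baire_property (ideal_as_cantor I)"
  shows "meager (ideal_as_cantor I)"
proof -
  obtain U M where UM: "open U" "meager M" "ideal_as_cantor I = (U - M) \<union> (M - U)"
    using assms(2) unfolding has_baire_property_def by blast
  show ?thesis
  proof (cases "U = {}")
    case True
    then have "ideal_as_cantor I \<subseteq> M"
      using UM(3) by blast
    then show ?thesis
      using UM(2) meager_subset by blast
  next
    case False
    then obtain s n where n: "cylinder s n \<subseteq> U"
      using open_contains_cylinder[OF UM(1)] by blast
    obtain t where t: "t \<in> cylinder s n" "t \<notin> M \<union> flip_tail n -` M"
      using meager_avoids_cylinder[OF meager_Un[OF UM(2) meager_vimage_flip_tail[OF UM(2)]]]
      by blast
    have "flip_tail n t \<in> cylinder s n"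
      using t(1) by (simp add: cylinder_def flip_tail_def)
    with t n have "t \<in> U - M" "flip_tail n t \<in> U - M"
      by auto
    then have "{i. t i} \<in> I" "{i. flip_tail n t i} \<in> I"
      using UM(3) by (auto simp: ideal_as_cantor_def)
    moreover have "{..<n} \<in> I"
      using I by (simp add: ideal_on_nat_def)
    ultimately have "{i. t i} \<union> {i. flip_tail n t i} \<union> {..<n} \<in> I"
      using I unfolding ideal_on_nat_def by blast
    moreover have "{i. t i} \<union> {i. flip_tail n t i} \<union> {..<n} = UNIV"
      by (auto simp: flip_tail_def)
    ultimately show ?thesis
      using I by (simp add: ideal_on_nat_def)
  qed
qed

lemma nowhere_dense_avoid_block_finite:
  fixes S :: "(nat \<Rightarrow> bool) set" and n :: nat
  assumes "nowhere_dense S" "finite P"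
  shows "\<exists>m>n. \<exists>u. \<forall>p\<in>P. \<forall>t. (\<forall>i<n. t i = p i) \<and> (\<forall>i\<in>{n..<m}. t i = u i) \<longrightarrow> t \<notin> S"
  using assms(2)
proof (induction P rule: finite_induct)
  case empty
  show ?case
    by (intro exI[of _ "Suc n"]) simp
next
  case (insert p P)
  then obtain m u where m: "n < m"
    and u: "\<forall>p\<in>P. \<forall>t. (\<forall>i<n. t i = p i) \<and> (\<forall>i\<in>{n..<m}. t i = u i) \<longrightarrow> t \<notin> S"
    by blast
  obtain v m' where v: "m < m'" "v \<in> cylinder (\<lambda>i. if i < n then p i else u i) m" "cylinder v m' \<inter> S = {}"
    using assms(1) unfolding nowhere_dense_iff_cylinders by blast
  have vp: "v i = p i" if "i < n" for i
    using v(2) that m by (simp add: cylinder_def)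
  have vu: "v i = u i" if "i \<in> {n..<m}" for i
    using v(2) that by (simp add: cylinder_def)
  have "t \<notin> S" if q: "q \<in> insert p P" and tq: "\<forall>i<n. t i = q i" and tv: "\<forall>i\<in>{n..<m'}. t i = v i" for q t
  proof (cases "q = p")
    case True
    have "t i = v i" if "i < m'" for i
    proof (cases "i < n")
      case True
      then show ?thesis
        using tq vp \<open>q = p\<close> by simp
    next
      case False
      then show ?thesis
        using tv that by simp
    qed
    then have "t \<in> cylinder v m'"
      by (simp add: cylinder_def)
    then show ?thesis
      using v(3) by blast
  next
    case False
    with q have "q \<in> P"
      by simp
    moreover have "\<forall>i\<in>{n..<m}. t i = u i"
    proof
      fix i assume i: "i \<in> {n..<m}"
      then have "i \<in> {n..<m'}"
        using v(1) by simp
      with tv vu[OF i] show "t i = u i"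
        by simp
    qed
    ultimately show ?thesis
      using tq u by blast
  qed
  then have "\<forall>q\<in>insert p P. \<forall>t. (\<forall>i<n. t i = q i) \<and> (\<forall>i\<in>{n..<m'}. t i = v i) \<longrightarrow> t \<notin> S"
    by blast
  moreover have "n < m'"
    using m v(1) by simp
  ultimately show ?case
    by blast
qed

lemma nowhere_dense_avoid_block:
  fixes S :: "(nat \<Rightarrow> bool) set" and n :: nat
  assumes "nowhere_dense S"
  shows "\<exists>m>n. \<exists>u. \<forall>t. (\<forall>i\<in>{n..<m}. t i = u i) \<longrightarrow> t \<notin> S"
proof -
  \<comment> \<open>only the finitely many restrictions of t to {..<n} matter\<close>
  define P where "P = (\<lambda>A i. i \<in> A) ` Pow {..<n}"
  have "finite P"
    by (simp add: P_def)
  from nowhere_dense_avoid_block_finite[OF assms this, where n=n]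
  obtain m u where "n < m"
    and u: "\<forall>p\<in>P. \<forall>t. (\<forall>i<n. t i = p i) \<and> (\<forall>i\<in>{n..<m}. t i = u i) \<longrightarrow> t \<notin> S"
    by (elim exE conjE)
  have "t \<notin> S" if t: "\<forall>i\<in>{n..<m}. t i = u i" for t
  proof -
    define p where "p i = (i \<in> {j. j < n \<and> t j})" for i
    have "p \<in> P"
      unfolding P_def p_def by (rule image_eqI[where x="{j. j < n \<and> t j}"]) (auto simp: fun_eq_iff)
    moreover have "\<forall>i<n. t i = p i"
      by (simp add: p_def)
    ultimately show ?thesis
      using u t by blast
  qed
  with \<open>n < m\<close> show ?thesis
    by blast
qed

lemma nowhere_dense_UN_atMost:
  fixes k :: nat
  shows "(\<And>i. nowhere_dense (F i)) \<Longrightarrow> nowhere_dense (\<Union>i\<le>k. F i)"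
proof (induction k)
  case (Suc k)
  then show ?case
    by (simp add: atMost_Suc nowhere_dense_Un)
qed simp

text \<open>One direction of Talagrand's characterization of meager subsets of the Cantor space.\<close>

lemma meager_imp_block_pattern:
  fixes M :: "(nat \<Rightarrow> bool) set"
  assumes "meager M"
  shows "\<exists>b u. strict_mono b \<and> (\<forall>t. infinite {k. \<forall>i\<in>{b k..<b (Suc k)}. t i = u k i} \<longrightarrow> t \<notin> M)"
proof -
  obtain F where F: "\<And>j::nat. nowhere_dense (F j)" "M \<subseteq> (\<Union>j. F j)"
    using assms unfolding meager_def by blast
  define G where "G k = (\<Union>j\<le>k. F j)" for k
  have G: "nowhere_dense (G k)" for k
    unfolding G_def using F(1) by (rule nowhere_dense_UN_atMost)
  define L where "L k n = (SOME m. n < m \<and> (\<exists>u. \<forall>t. (\<forall>i\<in>{n..<m}. t i = u i) \<longrightarrow> t \<notin> G k))"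
    for k n
  define U where "U k n = (SOME u. \<forall>t. (\<forall>i\<in>{n..<L k n}. t i = u i) \<longrightarrow> t \<notin> G k)" for k n
  have L: "n < L k n \<and> (\<exists>u. \<forall>t. (\<forall>i\<in>{n..<L k n}. t i = u i) \<longrightarrow> t \<notin> G k)" for k n
    unfolding L_def by (rule someI_ex) (rule nowhere_dense_avoid_block[OF G])
  have U: "(\<forall>i\<in>{n..<L k n}. t i = U k n i) \<Longrightarrow> t \<notin> G k" for k n t
    using someI_ex[OF conjunct2[OF L]] unfolding U_def[symmetric] by blast
  define b where "b k = rec_nat 0 L k" for k
  have b_Suc: "b (Suc k) = L k (b k)" for k
    by (simp add: b_def)
  have "strict_mono b"
    unfolding strict_mono_Suc_iff using L b_Suc by simp
  moreover have "t \<notin> M" if inf: "infinite {k. \<forall>i\<in>{b k..<b (Suc k)}. t i = U k (b k) i}" for t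
  proof
    assume "t \<in> M"
    then obtain j where j: "t \<in> F j"
      using F(2) by blast
    obtain k where "j \<le> k" and k: "\<forall>i\<in>{b k..<b (Suc k)}. t i = U k (b k) i"
      using inf unfolding infinite_nat_iff_unbounded_le by blast
    then have "t \<in> G k"
      using j by (auto simp: G_def)
    moreover have "t \<notin> G k"
      using k U[of "b k" k t] by (simp add: b_Suc)
    ultimately show False
      by blast
  qed
  ultimately show ?thesis
    by (intro exI[of _ b] exI[of _ "\<lambda>k. U k (b k)"]) simp
qed

lemma strict_mono_block_unique:
  fixes b :: "nat \<Rightarrow> nat"
  assumes "strict_mono b" "i \<in> {b k..<b (Suc k)}" "i \<in> {b k'..<b (Suc k')}"
  shows "k = k'"
proof (rule ccontr)
  assume "k \<noteq> k'"
  then consider "Suc k \<le> k'" | "Suc k' \<le> k"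
    by linarith
  then show False
  proof cases
    case 1
    then have "b (Suc k) \<le> b k'"
      by (simp add: strict_mono_less_eq[OF assms(1)])
    with assms(2,3) show False
      by simp
  next
    case 2
    then have "b (Suc k') \<le> b k"
      by (simp add: strict_mono_less_eq[OF assms(1)])
    with assms(2,3) show False
      by simp
  qed
qed

lemma meager_ideal_blocks:
  assumes I: "ideal_on_nat I" and "meager (ideal_as_cantor I)"
  shows "\<exists>b. strict_mono b \<and> (\<forall>X. infinite {k. {b k..<b (Suc k)} \<subseteq> X} \<longrightarrow> X \<notin> I)"
proof -
  obtain b u where b: "strict_mono b"
    and u: "\<And>t. infinite {k. \<forall>i\<in>{b k..<b (Suc k)}. t i = u k i} \<Longrightarrow> t \<notin> ideal_as_cantor I"
    using meager_imp_block_pattern[OF assms(2)] by blast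
  have "X \<notin> I" if X: "infinite {k. {b k..<b (Suc k)} \<subseteq> X}" for X
  proof
    assume "X \<in> I"
    define K where "K = {k. {b k..<b (Suc k)} \<subseteq> X}"
    \<comment> \<open>copy the pattern u k onto every block inside X\<close>
    define Y where "Y = {i. \<exists>k\<in>K. i \<in> {b k..<b (Suc k)} \<and> u k i}"
    have "Y \<subseteq> X"
      by (auto simp: Y_def K_def)
    with \<open>X \<in> I\<close> I have "(\<lambda>i. i \<in> Y) \<in> ideal_as_cantor I"
      by (simp add: ideal_as_cantor_def ideal_on_nat_def)
    moreover have "K \<subseteq> {k. \<forall>i\<in>{b k..<b (Suc k)}. (i \<in> Y) = u k i}"
    proof (intro subsetI CollectI ballI)
      fix k i assume k: "k \<in> K" and i: "i \<in> {b k..<b (Suc k)}"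
      have "k' = k" if "i \<in> {b k'..<b (Suc k')}" for k'
        using strict_mono_block_unique[OF b that i] .
      with k i show "(i \<in> Y) = u k i"
        unfolding Y_def by blast
    qed
    then have "infinite {k. \<forall>i\<in>{b k..<b (Suc k)}. (i \<in> Y) = u k i}"
      using X finite_subset unfolding K_def by blast
    ultimately show False
      using u[of "\<lambda>i. i \<in> Y"] by simp
  qed
  with b show ?thesis
    by blast
qed

section \<open>Selections with \<open>I\<close>-bounded partial sums\<close>

lemma sum_if_scaleR_eq_sum_filter:
  fixes x :: "nat \<Rightarrow> 'a::real_vector"
  shows "(\<Sum>i\<le>n. (if t i then 1 else 0) *\<^sub>R x i) = sum x {i\<in>{..n}. t i}"
proof -
  have "(\<Sum>i\<le>n. (if t i then 1 else 0) *\<^sub>R x i) = (\<Sum>i\<le>n. if t i then x i else 0)"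
    by (rule sum.cong) simp_all
  also have "\<dots> = sum x {i\<in>{..n}. t i}"
    by (rule sum.inter_filter[symmetric]) simp
  finally show ?thesis .
qed

lemma nowhere_dense_small_sums_on_blocks:
  fixes x :: "nat \<Rightarrow> 'a::real_normed_vector" and b :: "nat \<Rightarrow> nat"
  assumes b: "strict_mono b"
    and unbounded: "\<And>C N. \<exists>F. finite F \<and> F \<subseteq> {N..} \<and> C < norm (sum x F)"
  shows "nowhere_dense
    {t. \<forall>k\<ge>k0. \<exists>n\<in>{b k..<b (Suc k)}. norm (\<Sum>i\<le>n. (if t i then 1 else 0) *\<^sub>R x i) \<le> C}"
    (is "nowhere_dense ?B")
  unfolding nowhere_dense_iff_cylinders
proof (intro allI)
  fix s n0
  define a where "a = sum x {i. i < n0 \<and> s i}"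
  obtain F where F: "finite F" "F \<subseteq> {n0..}" "C + norm a < norm (sum x F)"
    using unbounded by blast
  obtain N where N: "F \<subseteq> {..<N}"
    using finite_nat_bounded[OF F(1)] by blast
  define k where "k = max k0 (max n0 N)"
  have "k \<le> b k"
    using b by (rule strict_mono_imp_increasing)
  then have k: "k0 \<le> k" "n0 \<le> b k" "N \<le> b k"
    by (auto simp: k_def)
  have bk: "b k < b (Suc k)"
    using b by (simp add: strict_mono_Suc_iff)
  \<comment> \<open>extend s by the indicator of F, which pushes the partial sums over all of block k above C\<close>
  define t0 where "t0 i = (if i < n0 then s i else i \<in> F)" for i
  have "t \<notin> ?B" if t: "t \<in> cylinder t0 (b (Suc k))" for t
  proof
    assume "t \<in> ?B"
    then have "\<forall>k\<ge>k0. \<exists>n\<in>{b k..<b (Suc k)}. norm (\<Sum>i\<le>n. (if t i then 1 else 0) *\<^sub>R x i) \<le> C"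
      by simp
    then obtain n where n: "n \<in> {b k..<b (Suc k)}"
      and small: "norm (\<Sum>i\<le>n. (if t i then 1 else 0) *\<^sub>R x i) \<le> C"
      using k(1) by blast
    have "{i\<in>{..n}. t i} = {i. i < n0 \<and> s i} \<union> F"
    proof (rule set_eqI)
      fix i
      show "i \<in> {i\<in>{..n}. t i} \<longleftrightarrow> i \<in> {i. i < n0 \<and> s i} \<union> F"
      proof (cases "i \<le> n")
        case True
        then have "t i = t0 i"
          using t n by (simp add: cylinder_def)
        then show ?thesis
          using True F(2) by (auto simp: t0_def)
      next
        case False
        then have "i \<notin> F" "\<not> i < n0"
          using N n k(2,3) by auto
        then show ?thesis
          using False by simp
      qed
    qed
    moreover have "{i. i < n0 \<and> s i} \<inter> F = {}"
      using F(2) by auto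
    then have "sum x ({i. i < n0 \<and> s i} \<union> F) = a + sum x F"
      unfolding a_def using F(1) by (intro sum.union_disjoint) simp_all
    ultimately have "(\<Sum>i\<le>n. (if t i then 1 else 0) *\<^sub>R x i) = a + sum x F"
      by (simp add: sum_if_scaleR_eq_sum_filter)
    moreover have "norm (sum x F) \<le> norm (a + sum x F) + norm a"
      using norm_triangle_ineq4[of "a + sum x F" a] by simp
    ultimately show False
      using small F(3) by simp
  qed
  moreover have "t0 \<in> cylinder s n0"
    by (simp add: cylinder_def t0_def)
  moreover have "n0 < b (Suc k)"
    using k(2) bk by simp
  ultimately show "\<exists>t m. n0 < m \<and> t \<in> cylinder s n0 \<and> cylinder t m \<inter> ?B = {}"
    by blast
qed

lemma A_set_meager:
  fixes x :: "nat \<Rightarrow> 'a::real_normed_vector"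
  assumes b: "strict_mono b"
    and blocks: "\<And>X. infinite {k. {b k..<b (Suc k)} \<subseteq> X} \<Longrightarrow> X \<notin> I"
    and unbounded: "\<And>C N. \<exists>F. finite F \<and> F \<subseteq> {N..} \<and> C < norm (sum x F)"
  shows "meager (A_set I x)"
proof -
  define B where "B C k0 = {t. \<forall>k\<ge>k0. \<exists>n\<in>{b k..<b (Suc k)}.
      norm (\<Sum>i\<le>n. (if t i then 1 else 0) *\<^sub>R x i) \<le> real C}" for C k0 :: nat
  have "A_set I x \<subseteq> (\<Union>C. \<Union>k0. B C k0)"
  proof
    fix t assume "t \<in> A_set I x"
    then obtain M where "{n. M < norm (\<Sum>i\<le>n. (if t i then 1 else 0) *\<^sub>R x i)} \<in> I"
      (is "?E \<in> I")
      unfolding A_set_def I_bounded_def by blast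
    then have "finite {k. {b k..<b (Suc k)} \<subseteq> ?E}"
      using blocks by blast
    then obtain k0 where k0: "{k. {b k..<b (Suc k)} \<subseteq> ?E} \<subseteq> {..<k0}"
      using finite_nat_bounded by blast
    have "t \<in> B (nat \<lceil>M\<rceil>) k0"
      unfolding B_def
    proof (intro CollectI allI impI)
      fix k assume "k0 \<le> k"
      with k0 have "\<not> {b k..<b (Suc k)} \<subseteq> ?E"
        by auto
      then obtain n where "n \<in> {b k..<b (Suc k)}" "n \<notin> ?E"
        by blast
      then show "\<exists>n\<in>{b k..<b (Suc k)}. norm (\<Sum>i\<le>n. (if t i then 1 else 0) *\<^sub>R x i) \<le> real (nat \<lceil>M\<rceil>)"
        by (intro bexI[of _ n]) (auto intro: order_trans[OF _ real_nat_ceiling_ge])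
    qed
    then show "t \<in> (\<Union>C. \<Union>k0. B C k0)"
      by blast
  qed
  moreover have "meager (\<Union>C. \<Union>k0. B C k0)"
    unfolding B_def
    by (intro meager_UN nowhere_dense_imp_meager nowhere_dense_small_sums_on_blocks[OF b unbounded])
  ultimately show ?thesis
    using meager_subset by blast
qed

section \<open>The Bessaga-Pelczynski theorem\<close>

lemma norm_sum_scaleR_le_subset_sum:
  fixes y :: "'i \<Rightarrow> 'a::real_normed_vector"
  assumes "finite K" "\<And>k. k \<in> K \<Longrightarrow> 0 \<le> a k \<and> a k \<le> 1"
  shows "\<exists>K'\<subseteq>K. norm (z + (\<Sum>k\<in>K. a k *\<^sub>R y k)) \<le> norm (z + sum y K')"
  using assms
proof (induction K arbitrary: z rule: finite_induct)
  case empty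
  then show ?case
    by auto
next
  case (insert j K)
  define R where "R = (\<Sum>k\<in>K. a k *\<^sub>R y k)"
  have aj: "0 \<le> a j" "a j \<le> 1"
    using insert.prems by auto
  obtain K1 where K1: "K1 \<subseteq> K" "norm (z + R) \<le> norm (z + sum y K1)"
    using insert.IH[of z] insert.prems unfolding R_def by auto
  obtain K2 where K2: "K2 \<subseteq> K" "norm ((z + y j) + R) \<le> norm ((z + y j) + sum y K2)"
    using insert.IH[of "z + y j"] insert.prems unfolding R_def by auto
  have "finite K2" "j \<notin> K2"
    using K2(1) insert.hyps finite_subset by blast+
  then have K2j: "(z + y j) + sum y K2 = z + sum y (insert j K2)"
    by (simp add: add.assoc)
  \<comment> \<open>the sum is affine in a j, so it is dominated by one of the two extreme choices\<close>
  have "z + (\<Sum>k\<in>insert j K. a k *\<^sub>R y k) = a j *\<^sub>R ((z + y j) + R) + (1 - a j) *\<^sub>R (z + R)"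
    using insert.hyps by (simp add: R_def algebra_simps)
  then have "norm (z + (\<Sum>k\<in>insert j K. a k *\<^sub>R y k))
      \<le> a j * norm ((z + y j) + R) + (1 - a j) * norm (z + R)"
    using aj norm_triangle_ineq[of "a j *\<^sub>R ((z + y j) + R)" "(1 - a j) *\<^sub>R (z + R)"] by simp
  also have "\<dots> \<le> max (norm (z + sum y (insert j K2))) (norm (z + sum y K1))"
    using aj K1(2) K2(2) unfolding K2j by (intro convex_bound_le) auto
  finally have bound: "norm (z + (\<Sum>k\<in>insert j K. a k *\<^sub>R y k))
      \<le> max (norm (z + sum y (insert j K2))) (norm (z + sum y K1))" .
  show ?case
  proof (cases "norm (z + sum y K1) \<le> norm (z + sum y (insert j K2))")
    case True
    with bound K2(1) show ?thesis
      by (intro exI[of _ "insert j K2"]) auto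
  next
    case False
    with bound K1(1) show ?thesis
      by (intro exI[of _ K1]) auto
  qed
qed

lemma norm_sum_scaleR_le_bounded_subsums:
  fixes y :: "'i \<Rightarrow> 'a::real_normed_vector"
  assumes C: "\<And>K. finite K \<Longrightarrow> norm (sum y K) \<le> C"
    and K: "finite K" and a: "\<And>k. k \<in> K \<Longrightarrow> \<bar>a k\<bar> \<le> r" and "0 \<le> r"
  shows "norm (\<Sum>k\<in>K. a k *\<^sub>R y k) \<le> 2 * C * r"
proof (cases "r = 0")
  case True
  then have "a k *\<^sub>R y k = 0" if "k \<in> K" for k
    using a[OF that] by simp
  then have "(\<Sum>k\<in>K. a k *\<^sub>R y k) = 0"
    by (intro sum.neutral) blast
  with True show ?thesis
    by simp
next
  case False
  with \<open>0 \<le> r\<close> have r: "0 < r"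
    by simp
  have bound: "norm (\<Sum>k\<in>K. c k *\<^sub>R y k) \<le> C" if c: "\<And>k. k \<in> K \<Longrightarrow> 0 \<le> c k \<and> c k \<le> 1" for c
  proof -
    obtain K' where K': "K' \<subseteq> K" and le: "norm (0 + (\<Sum>k\<in>K. c k *\<^sub>R y k)) \<le> norm (0 + sum y K')"
      using norm_sum_scaleR_le_subset_sum[where a=c and z=0, OF K c] by blast
    have "finite K'"
      using K' K by (rule finite_subset)
    then have "norm (sum y K') \<le> C"
      by (rule C)
    with le show ?thesis
      by simp
  qed
  \<comment> \<open>split a / r into positive and negative parts, both with values in [0, 1]\<close>
  define p where "p k = max (a k / r) 0" for k
  define m where "m k = max (- (a k / r)) 0" for k
  have p01: "0 \<le> p k \<and> p k \<le> 1" and m01: "0 \<le> m k \<and> m k \<le> 1" if "k \<in> K" for k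
  proof -
    have "\<bar>a k\<bar> \<le> r"
      using a[OF that] .
    then have "a k / r \<le> 1" "- (a k / r) \<le> 1"
      using r by (simp_all add: divide_le_eq_1 abs_le_iff field_simps)
    then show "0 \<le> p k \<and> p k \<le> 1" "0 \<le> m k \<and> m k \<le> 1"
      by (simp_all add: p_def m_def)
  qed
  have "p k - m k = a k / r" for k
    by (simp add: p_def m_def max_def)
  then have "a k *\<^sub>R y k = r *\<^sub>R (p k *\<^sub>R y k - m k *\<^sub>R y k)" for k
    using r by (simp add: scaleR_diff_left[symmetric])
  then have "(\<Sum>k\<in>K. a k *\<^sub>R y k) = (\<Sum>k\<in>K. r *\<^sub>R (p k *\<^sub>R y k - m k *\<^sub>R y k))"
    by simp
  also have "\<dots> = r *\<^sub>R ((\<Sum>k\<in>K. p k *\<^sub>R y k) - (\<Sum>k\<in>K. m k *\<^sub>R y k))"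
    by (simp add: scaleR_sum_right[symmetric] sum_subtractf)
  finally have eq: "(\<Sum>k\<in>K. a k *\<^sub>R y k) = r *\<^sub>R ((\<Sum>k\<in>K. p k *\<^sub>R y k) - (\<Sum>k\<in>K. m k *\<^sub>R y k))" .
  have "norm ((\<Sum>k\<in>K. p k *\<^sub>R y k) - (\<Sum>k\<in>K. m k *\<^sub>R y k)) \<le> C + C"
    using bound[of p, OF p01] bound[of m, OF m01]
      norm_triangle_ineq4[of "\<Sum>k\<in>K. p k *\<^sub>R y k" "\<Sum>k\<in>K. m k *\<^sub>R y k"]
    by linarith
  then have "r * norm ((\<Sum>k\<in>K. p k *\<^sub>R y k) - (\<Sum>k\<in>K. m k *\<^sub>R y k)) \<le> r * (C + C)"
    using r by (intro mult_left_mono) simp_all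
  then show ?thesis
    using r by (simp add: eq)
qed

lemma unconditionally_convergentI_small_tails:
  fixes x :: "nat \<Rightarrow> 'a::banach"
  assumes small: "\<And>e. 0 < e \<Longrightarrow> \<exists>N. \<forall>F. finite F \<longrightarrow> F \<subseteq> {N..} \<longrightarrow> norm (sum x F) < e"
  shows "unconditionally_convergent x"
  unfolding unconditionally_convergent_def
proof (intro allI impI)
  fix \<sigma> :: "nat \<Rightarrow> nat" assume "bij \<sigma>"
  then have inj: "inj \<sigma>"
    by (rule bij_is_inj)
  show "summable (x \<circ> \<sigma>)"
    unfolding summable_Cauchy
  proof (intro allI impI)
    fix e :: real assume "0 < e"
    then obtain N where N: "\<forall>F. finite F \<longrightarrow> F \<subseteq> {N..} \<longrightarrow> norm (sum x F) < e"
      using small by blast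
    \<comment> \<open>beyond M, sigma avoids the finitely many indices below N\<close>
    define M where "M = Suc (Max (insert 0 (inv \<sigma> ` {..<N})))"
    have big: "N \<le> \<sigma> i" if "M \<le> i" for i
    proof (rule ccontr)
      assume "\<not> N \<le> \<sigma> i"
      then have "inv \<sigma> (\<sigma> i) \<in> insert 0 (inv \<sigma> ` {..<N})"
        by simp
      then have "inv \<sigma> (\<sigma> i) \<le> Max (insert 0 (inv \<sigma> ` {..<N}))"
        by (intro Max_ge) simp_all
      then have "i < M"
        using inv_f_f[OF inj, of i] by (simp add: M_def)
      then show False
        using that by simp
    qed
    have "norm (sum (x \<circ> \<sigma>) {m..<n}) < e" if "M \<le> m" for m n
    proof -
      have "sum (x \<circ> \<sigma>) {m..<n} = sum x (\<sigma> ` {m..<n})"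
        using sum.reindex[of \<sigma> "{m..<n}" x] inj by (simp add: inj_on_subset)
      moreover have "\<sigma> ` {m..<n} \<subseteq> {N..}"
        using big that by auto
      ultimately show ?thesis
        using N by simp
    qed
    then show "\<exists>M. \<forall>m\<ge>M. \<forall>n. norm (sum (x \<circ> \<sigma>) {m..<n}) < e"
      by blast
  qed
qed

lemma not_unconditionally_convergent_tail_sums:
  fixes x :: "nat \<Rightarrow> 'a::banach"
  assumes "\<not> unconditionally_convergent x"
  obtains \<epsilon> where "0 < \<epsilon>" "\<And>N. \<exists>F. finite F \<and> F \<subseteq> {N..} \<and> \<epsilon> \<le> norm (sum x F)"
proof -
  have "\<exists>\<epsilon>>0. \<forall>N. \<exists>F. finite F \<and> F \<subseteq> {N..} \<and> \<epsilon> \<le> norm (sum x F)"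
  proof (rule ccontr)
    assume "\<not> (\<exists>\<epsilon>>0. \<forall>N. \<exists>F. finite F \<and> F \<subseteq> {N..} \<and> \<epsilon> \<le> norm (sum x F))"
    then have "\<exists>N. \<forall>F. finite F \<longrightarrow> F \<subseteq> {N..} \<longrightarrow> norm (sum x F) < e" if "0 < e" for e
      using that by (meson not_le)
    then have "unconditionally_convergent x"
      by (rule unconditionally_convergentI_small_tails)
    with assms show False
      by contradiction
  qed
  with that show ?thesis
    by blast
qed

lemma disjoint_block_sums:
  fixes x :: "nat \<Rightarrow> 'a::real_normed_vector"
  assumes tails: "\<And>N. \<exists>F. finite F \<and> F \<subseteq> {N..} \<and> \<epsilon> \<le> norm (sum x F)"
    and C: "\<And>F. finite F \<Longrightarrow> norm (sum x F) \<le> C"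
  obtains y :: "nat \<Rightarrow> 'a" where "\<And>k. \<epsilon> \<le> norm (y k)" "\<And>K. finite K \<Longrightarrow> norm (sum y K) \<le> C"
proof -
  have "\<forall>N. \<exists>F. finite F \<and> F \<subseteq> {N..} \<and> \<epsilon> \<le> norm (sum x F)"
    using tails by blast
  from choice[OF this] obtain F
    where F: "\<And>N. finite (F N)" "\<And>N. F N \<subseteq> {N..}" "\<And>N. \<epsilon> \<le> norm (sum x (F N))"
    by blast
  define N where "N k = rec_nat 0 (\<lambda>_ n. Suc (Max (insert n (F n)))) k" for k
  have N_Suc: "N (Suc k) = Suc (Max (insert (N k) (F (N k))))" for k
    by (simp add: N_def)
  define B where "B k = F (N k)" for k
  have B: "B k \<subseteq> {N k..<N (Suc k)}" for k
  proof
    fix i assume "i \<in> B k"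
    moreover have "i \<le> Max (insert (N k) (F (N k)))" if "i \<in> F (N k)"
      using F(1) that by simp
    ultimately show "i \<in> {N k..<N (Suc k)}"
      using F(2) by (auto simp: B_def N_Suc)
  qed
  have "N k < N (Suc k)" for k
    using F(1) by (simp add: N_Suc less_Suc_eq_le)
  then have "strict_mono N"
    by (simp add: strict_mono_Suc_iff)
  have disjoint: "B k \<inter> B k' = {}" if "k < k'" for k k'
  proof -
    have "N (Suc k) \<le> N k'"
      using that \<open>strict_mono N\<close> by (simp add: strict_mono_less_eq)
    then show ?thesis
      using B[of k] B[of k'] by fastforce
  qed
  have disjoint': "B k \<inter> B k' = {}" if "k \<noteq> k'" for k k'
  proof (cases "k < k'")
    case False
    with that have "k' < k"
      by simp
    then show ?thesis
      using disjoint[of k' k] by blast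
  qed (rule disjoint)
  have finite_B: "finite (B k)" for k
    using F(1) by (simp add: B_def)
  have "norm (\<Sum>k\<in>K. sum x (B k)) \<le> C" if "finite K" for K
  proof -
    have "(\<Sum>k\<in>K. sum x (B k)) = sum x (\<Union>(B ` K))"
      using that finite_B disjoint' by (intro sum.UNION_disjoint[symmetric]) blast+
    also have "norm \<dots> \<le> C"
      using that finite_B by (intro C) simp
    finally show ?thesis .
  qed
  moreover have "\<epsilon> \<le> norm (sum x (B k))" for k
    using F(3) by (simp add: B_def)
  ultimately show ?thesis
    using that[of "\<lambda>k. sum x (B k)"] by blast
qed

lemma eventually_norm_add_scaleR_ge:
  fixes y :: "nat \<Rightarrow> 'a::real_normed_vector"
  assumes C: "\<And>K. finite K \<Longrightarrow> norm (sum y K) \<le> C" and "0 < \<eta>"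
  shows "eventually (\<lambda>k. norm e - \<eta> \<le> norm (e + l *\<^sub>R y k)) sequentially"
proof (rule ccontr)
  assume "\<not> eventually (\<lambda>k. norm e - \<eta> \<le> norm (e + l *\<^sub>R y k)) sequentially"
  then have "frequently (\<lambda>k. norm (e + l *\<^sub>R y k) < norm e - \<eta>) sequentially"
    by (simp add: not_eventually not_le)
  then have inf: "infinite {k. norm (e + l *\<^sub>R y k) < norm e - \<eta>}"
    unfolding cofinite_eq_sequentially[symmetric] frequently_cofinite .
  have "0 \<le> C"
    using C[of "{}"] by simp
  \<comment> \<open>averaging n such k, the contribution of y has norm at most \<bar>l\<bar> C / n\<close>
  obtain n :: nat where n: "\<bar>l\<bar> * C / \<eta> < real n"
    using reals_Archimedean2 by blast
  moreover have "0 \<le> \<bar>l\<bar> * C / \<eta>"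
    using \<open>0 \<le> C\<close> \<open>0 < \<eta>\<close> by simp
  ultimately have "0 < n"
    by linarith
  have "\<bar>l\<bar> * C < real n * \<eta>"
    using n \<open>0 < \<eta>\<close> by (simp add: field_simps)
  obtain S where S: "finite S" "card S = n" "S \<subseteq> {k. norm (e + l *\<^sub>R y k) < norm e - \<eta>}"
    using infinite_arbitrarily_large[OF inf] by blast
  have "S \<noteq> {}"
    using S(2) \<open>0 < n\<close> by auto
  have "norm (real n *\<^sub>R e + l *\<^sub>R sum y S) = norm (\<Sum>k\<in>S. e + l *\<^sub>R y k)"
    using S(2) by (simp add: sum.distrib scaleR_sum_right sum_constant_scaleR)
  also have "\<dots> \<le> (\<Sum>k\<in>S. norm (e + l *\<^sub>R y k))"
    by (rule norm_sum)
  also have "\<dots> < (\<Sum>k\<in>S. norm e - \<eta>)"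
    using S(1,3) \<open>S \<noteq> {}\<close> by (intro sum_strict_mono) auto
  also have "\<dots> = real n * (norm e - \<eta>)"
    using S(2) by simp
  finally have "norm (real n *\<^sub>R e + l *\<^sub>R sum y S) < real n * (norm e - \<eta>)" .
  moreover have "norm (l *\<^sub>R sum y S) \<le> \<bar>l\<bar> * C"
    using C[OF S(1)] by (simp add: mult_left_mono)
  moreover have "real n * norm e \<le> norm (real n *\<^sub>R e + l *\<^sub>R sum y S) + norm (l *\<^sub>R sum y S)"
    using norm_triangle_ineq4[of "real n *\<^sub>R e + l *\<^sub>R sum y S" "l *\<^sub>R sum y S"] by simp
  ultimately show False
    using \<open>\<bar>l\<bar> * C < real n * \<eta>\<close> by (simp add: algebra_simps)
qed

lemma eventually_norm_add_scaleR_ge_compact: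
  fixes y :: "nat \<Rightarrow> 'a::real_normed_vector"
  assumes C: "\<And>K. finite K \<Longrightarrow> norm (sum y K) \<le> C" and "0 < \<eta>"
    and "compact (S :: ('a \<times> real) set)"
  shows "eventually (\<lambda>k. \<forall>(e, l)\<in>S. norm e - \<eta> \<le> norm (e + l *\<^sub>R y k)) sequentially"
proof -
  have "0 \<le> C"
    using C[of "{}"] by simp
  have yC: "norm (y k) \<le> C" for k
    using C[of "{k}"] by simp
  \<comment> \<open>a finite r-net of S, with r chosen so that moving within r costs at most \<eta>/2\<close>
  define r where "r = \<eta> / (2 * (2 + C))"
  have "0 < r"
    using \<open>0 < \<eta>\<close> \<open>0 \<le> C\<close> by (simp add: r_def)
  have "r * (2 + C) = \<eta> / 2"
    using \<open>0 \<le> C\<close> by (simp add: r_def field_simps)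
  then have r: "2 * r + r * C = \<eta> / 2"
    by (simp add: algebra_simps)
  obtain T where T: "T \<subseteq> S" "finite T" "S \<subseteq> (\<Union>p\<in>T. ball p r)"
    using compactE_image[OF assms(3), of S "\<lambda>p. ball p r"] \<open>0 < r\<close>
    by (metis open_ball centre_in_ball UN_I subsetI)
  have "\<forall>p\<in>T. eventually (\<lambda>k. norm (fst p) - \<eta>/2 \<le> norm (fst p + snd p *\<^sub>R y k)) sequentially"
    using eventually_norm_add_scaleR_ge[where y=y and C=C, OF C] \<open>0 < \<eta>\<close> by simp
  then have "eventually (\<lambda>k. \<forall>p\<in>T. norm (fst p) - \<eta>/2 \<le> norm (fst p + snd p *\<^sub>R y k)) sequentially"
    by (rule eventually_ball_finite[OF T(2)])
  then show ?thesis
  proof (rule eventually_mono, safe)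
    fix k e l
    assume H: "\<forall>p\<in>T. norm (fst p) - \<eta>/2 \<le> norm (fst p + snd p *\<^sub>R y k)" and "(e, l) \<in> S"
    then obtain p where p: "p \<in> T" "dist p (e, l) < r"
      using T(3) by auto
    have d1: "norm (fst p - e) < r"
      using dist_fst_le[of p "(e, l)"] p(2) by (simp add: dist_norm)
    have d2: "\<bar>snd p - l\<bar> < r"
      using dist_snd_le[of p "(e, l)"] p(2) by (simp add: dist_real_def)
    have "fst p + snd p *\<^sub>R y k = (e + l *\<^sub>R y k) + ((fst p - e) + (snd p - l) *\<^sub>R y k)"
      by (simp add: algebra_simps)
    then have "norm (fst p + snd p *\<^sub>R y k) \<le> norm (e + l *\<^sub>R y k) + norm ((fst p - e) + (snd p - l) *\<^sub>R y k)"
      by (metis norm_triangle_ineq)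
    moreover have "norm ((fst p - e) + (snd p - l) *\<^sub>R y k) \<le> norm (fst p - e) + \<bar>snd p - l\<bar> * norm (y k)"
      using norm_triangle_ineq[of "fst p - e" "(snd p - l) *\<^sub>R y k"] by simp
    moreover have "\<bar>snd p - l\<bar> * norm (y k) \<le> r * C"
      using d2 yC by (intro mult_mono) simp_all
    moreover have "norm e \<le> norm (fst p) + r"
      using norm_triangle_sub[of e "fst p"] d1 by (simp add: norm_minus_commute)
    moreover have "norm (fst p) - \<eta>/2 \<le> norm (fst p + snd p *\<^sub>R y k)"
      using H p(1) by blast
    ultimately show "norm e - \<eta> \<le> norm (e + l *\<^sub>R y k)"
      using d1 r by linarith
  qed
qed

lemma almost_norm_increasing_subsequence:
  fixes y :: "nat \<Rightarrow> 'a::real_normed_vector"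
  assumes C: "\<And>K. finite K \<Longrightarrow> norm (sum y K) \<le> C" and \<eta>: "\<And>j. 0 < \<eta> j"
  obtains ks :: "nat \<Rightarrow> nat" where "strict_mono ks"
    "\<And>c j. \<forall>i. \<bar>c i\<bar> \<le> 1 \<Longrightarrow>
      norm (\<Sum>i<j. c i *\<^sub>R y (ks i)) \<le> norm (\<Sum>i<Suc j. c i *\<^sub>R y (ks i)) + \<eta> j"
proof -
  define step where "step K k = (\<lambda>q. fst q + snd q *\<^sub>R y k) ` (K \<times> {-1..1::real})" for K k
  define good where "good K j k \<longleftrightarrow> (\<forall>e\<in>K. \<forall>l\<in>{-1..1::real}. norm e - \<eta> j \<le> norm (e + l *\<^sub>R y k))"
    for K j k
  have compact_step: "compact (step K k)" if "compact K" for K k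
    unfolding step_def
    by (rule compact_continuous_image) (use that in \<open>auto intro!: continuous_intros compact_Times\<close>)
  have good_exists: "\<exists>k'. k < k' \<and> good K j k'" if "compact K" for K j k
  proof -
    have "compact (K \<times> {-1..1::real})"
      using that by (intro compact_Times) auto
    from eventually_norm_add_scaleR_ge_compact[where y=y and C=C, OF C \<eta> this]
    obtain N where N: "\<forall>k'\<ge>N. \<forall>(e, l)\<in>K \<times> {-1..1}. norm e - \<eta> j \<le> norm (e + l *\<^sub>R y k')"
      unfolding eventually_sequentially by blast
    have "good K j (max N (Suc k))"
      unfolding good_def
    proof (intro ballI)
      fix e l assume "e \<in> K" "l \<in> {-1..1::real}"
      then show "norm e - \<eta> j \<le> norm (e + l *\<^sub>R y (max N (Suc k)))"
        using N by fastforce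
    qed
    then show ?thesis
      by (intro exI[of _ "max N (Suc k)"]) simp
  qed
  \<comment> \<open>stage j fixes ks j and the compact set Ks j of all combinations of the first j chosen terms
    with coefficients in [-1, 1]\<close>
  define st where "st j = rec_nat (0, {0})
    (\<lambda>j p. (SOME k'. fst p < k' \<and> good (step (snd p) (fst p)) (Suc j) k', step (snd p) (fst p))) j" for j
  define ks where "ks j = fst (st j)" for j
  define Ks where "Ks j = snd (st j)" for j
  have Ks_0: "Ks 0 = {0}" and Ks_Suc: "Ks (Suc j) = step (Ks j) (ks j)"
    and ks_Suc: "ks (Suc j) = (SOME k'. ks j < k' \<and> good (Ks (Suc j)) (Suc j) k')" for j
    by (simp_all add: ks_def Ks_def st_def)
  have compact_Ks: "compact (Ks j)" for j
    by (induction j) (simp_all add: Ks_0 Ks_Suc compact_step)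
  have ks_good: "ks j < ks (Suc j) \<and> good (Ks (Suc j)) (Suc j) (ks (Suc j))" for j
    unfolding ks_Suc by (rule someI_ex) (rule good_exists[OF compact_Ks])
  then have "strict_mono ks"
    by (simp add: strict_mono_Suc_iff)
  have mem: "(\<Sum>i<j. c i *\<^sub>R y (ks i)) \<in> Ks j" if c: "\<forall>i. \<bar>c i\<bar> \<le> 1" for c j
  proof (induction j)
    case 0
    then show ?case
      by (simp add: Ks_0)
  next
    case (Suc j)
    have "c j \<in> {-1..1}"
      using c by (simp add: abs_le_iff)
    with Suc have "(\<Sum>i<Suc j. c i *\<^sub>R y (ks i)) \<in> step (Ks j) (ks j)"
      unfolding step_def by (intro image_eqI[where x="((\<Sum>i<j. c i *\<^sub>R y (ks i)), c j)"]) auto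
    then show ?case
      by (simp add: Ks_Suc)
  qed
  have "norm (\<Sum>i<j. c i *\<^sub>R y (ks i)) \<le> norm (\<Sum>i<Suc j. c i *\<^sub>R y (ks i)) + \<eta> j"
    if c: "\<forall>i. \<bar>c i\<bar> \<le> 1" for c j
  proof (cases j)
    case 0
    then show ?thesis
      using \<eta>[of 0] by simp
  next
    case (Suc j')
    then have "good (Ks j) j (ks j)"
      using ks_good[of j'] by simp
    moreover have "c j \<in> {-1..1}"
      using c by (simp add: abs_le_iff)
    ultimately have "norm (\<Sum>i<j. c i *\<^sub>R y (ks i)) - \<eta> j
        \<le> norm ((\<Sum>i<j. c i *\<^sub>R y (ks i)) + c j *\<^sub>R y (ks j))"
      using mem[OF c, of j] unfolding good_def by blast
    then show ?thesis
      by simp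
  qed
  with \<open>strict_mono ks\<close> show ?thesis
    using that by blast
qed

lemma bdd_above_abs_c0: "f \<in> c0 \<Longrightarrow> bdd_above (range (\<lambda>n. \<bar>f n\<bar>))"
proof -
  assume "f \<in> c0"
  then have "Bseq f"
    unfolding c0_def by (auto intro: convergent_imp_Bseq convergentI)
  then obtain K where "\<And>n. norm (f n) \<le> K"
    using BseqE by metis
  then show ?thesis
    by (intro bdd_aboveI[of _ K]) auto
qed

lemma abs_le_sup_norm: "f \<in> c0 \<Longrightarrow> \<bar>f n\<bar> \<le> sup_norm f"
  unfolding sup_norm_def by (rule cSUP_upper) (simp_all add: bdd_above_abs_c0)

lemma sup_norm_nonneg: "f \<in> c0 \<Longrightarrow> 0 \<le> sup_norm f"
  using abs_le_sup_norm[of f 0] by (meson abs_ge_zero order_trans)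

lemma sup_norm_le: "(\<And>n. \<bar>f n\<bar> \<le> B) \<Longrightarrow> sup_norm f \<le> B"
  unfolding sup_norm_def by (rule cSUP_least) auto

lemma exists_abs_gt_half_sup_norm:
  assumes "f \<in> c0" "0 < sup_norm f"
  obtains j where "sup_norm f / 2 < \<bar>f j\<bar>"
proof -
  have "sup_norm f / 2 < (SUP n. \<bar>f n\<bar>)"
    using assms(2) by (simp add: sup_norm_def)
  moreover have "sup_norm f / 2 < (SUP n. \<bar>f n\<bar>) \<longleftrightarrow> (\<exists>j\<in>UNIV. sup_norm f / 2 < \<bar>f j\<bar>)"
    by (rule less_cSUP_iff) (simp_all add: bdd_above_abs_c0[OF assms(1)])
  ultimately have "\<exists>j. sup_norm f / 2 < \<bar>f j\<bar>"
    by blast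
  with that show ?thesis
    by blast
qed

lemma summable_scaleR_bounded_subsums:
  fixes w :: "nat \<Rightarrow> 'a::banach"
  assumes C: "\<And>K. finite K \<Longrightarrow> norm (sum w K) \<le> C" and f: "f \<longlonglongrightarrow> 0"
  shows "summable (\<lambda>i. f i *\<^sub>R w i)"
  unfolding summable_Cauchy
proof (intro allI impI)
  fix e :: real assume "0 < e"
  have "0 \<le> C"
    using C[of "{}"] by simp
  define r where "r = e / (2 * (C + 1))"
  have "0 < r"
    using \<open>0 < e\<close> \<open>0 \<le> C\<close> by (simp add: r_def)
  then obtain N where N: "\<And>n. N \<le> n \<Longrightarrow> \<bar>f n\<bar> < r"
    using f unfolding LIMSEQ_iff by auto
  have "norm (\<Sum>i\<in>{m..<n}. f i *\<^sub>R w i) < e" if "N \<le> m" for m n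
  proof -
    have "norm (\<Sum>i\<in>{m..<n}. f i *\<^sub>R w i) \<le> 2 * C * r"
      using that N \<open>0 < r\<close>
      by (intro norm_sum_scaleR_le_bounded_subsums[where y=w and C=C, OF C]) (auto intro: less_imp_le)
    also have "\<dots> < e"
      using \<open>0 < e\<close> \<open>0 \<le> C\<close> by (simp add: r_def field_simps)
    finally show ?thesis .
  qed
  then show "\<exists>N. \<forall>m\<ge>N. \<forall>n. norm (\<Sum>i\<in>{m..<n}. f i *\<^sub>R w i) < e"
    by blast
qed

lemma norm_suminf_scaleR_le_sup_norm:
  fixes w :: "nat \<Rightarrow> 'a::banach"
  assumes C: "\<And>K. finite K \<Longrightarrow> norm (sum w K) \<le> C" and f: "f \<in> c0"
  shows "norm (\<Sum>i. f i *\<^sub>R w i) \<le> 2 * C * sup_norm f"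
proof -
  have "f \<longlonglongrightarrow> 0"
    using f by (simp add: c0_def)
  then have lim: "(\<lambda>q. norm (\<Sum>i<q. f i *\<^sub>R w i)) \<longlonglongrightarrow> norm (\<Sum>i. f i *\<^sub>R w i)"
    by (intro tendsto_norm summable_LIMSEQ summable_scaleR_bounded_subsums[where w=w and C=C, OF C])
  have "norm (\<Sum>i<q. f i *\<^sub>R w i) \<le> 2 * C * sup_norm f" for q
    using abs_le_sup_norm[OF f] sup_norm_nonneg[OF f]
    by (intro norm_sum_scaleR_le_bounded_subsums[where y=w and C=C, OF C]) auto
  then show ?thesis
    by (intro Lim_bounded[OF lim, of 0]) auto
qed

lemma coefficient_le_norm_partial_sum:
  fixes w :: "nat \<Rightarrow> 'a::real_normed_vector"
  assumes w: "\<And>k. \<epsilon> \<le> norm (w k)"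
    and almost: "\<And>c p q. \<forall>i. \<bar>c i\<bar> \<le> 1 \<Longrightarrow> p \<le> q \<Longrightarrow>
      norm (\<Sum>i<p. c i *\<^sub>R w i) \<le> norm (\<Sum>i<q. c i *\<^sub>R w i) + \<epsilon> / 8"
    and c: "\<forall>i. \<bar>c i\<bar> \<le> 1" and "j < q"
  shows "\<bar>c j\<bar> * \<epsilon> \<le> 2 * norm (\<Sum>i<q. c i *\<^sub>R w i) + \<epsilon> / 4"
proof -
  have "\<bar>c j\<bar> * \<epsilon> \<le> norm (c j *\<^sub>R w j)"
    using w[of j] by (simp add: mult_left_mono)
  also have "c j *\<^sub>R w j = (\<Sum>i<Suc j. c i *\<^sub>R w i) - (\<Sum>i<j. c i *\<^sub>R w i)"
    by simp
  also have "norm \<dots> \<le> norm (\<Sum>i<Suc j. c i *\<^sub>R w i) + norm (\<Sum>i<j. c i *\<^sub>R w i)"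
    by (rule norm_triangle_ineq4)
  also have "\<dots> \<le> 2 * norm (\<Sum>i<q. c i *\<^sub>R w i) + \<epsilon> / 4"
    using almost[OF c, of "Suc j" q] almost[OF c, of j q] \<open>j < q\<close> by simp
  finally show ?thesis .
qed

lemma sup_norm_le_norm_suminf_scaleR:
  fixes w :: "nat \<Rightarrow> 'a::banach"
  assumes C: "\<And>K. finite K \<Longrightarrow> norm (sum w K) \<le> C" and "0 < \<epsilon>"
    and w: "\<And>k. \<epsilon> \<le> norm (w k)"
    and almost: "\<And>c p q. \<forall>i. \<bar>c i\<bar> \<le> 1 \<Longrightarrow> p \<le> q \<Longrightarrow>
      norm (\<Sum>i<p. c i *\<^sub>R w i) \<le> norm (\<Sum>i<q. c i *\<^sub>R w i) + \<epsilon> / 8"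
    and f: "f \<in> c0"
  shows "\<epsilon> / 8 * sup_norm f \<le> norm (\<Sum>i. f i *\<^sub>R w i)"
proof (cases "sup_norm f = 0")
  case False
  define s where "s = sup_norm f"
  have "f \<longlonglongrightarrow> 0"
    using f by (simp add: c0_def)
  have "0 < s"
    using False sup_norm_nonneg[OF f] by (simp add: s_def)
  then obtain j where j: "s / 2 < \<bar>f j\<bar>"
    using exists_abs_gt_half_sup_norm[OF f] by (auto simp: s_def)
  define c where "c i = f i / s" for i
  have c: "\<forall>i. \<bar>c i\<bar> \<le> 1"
    using abs_le_sup_norm[OF f] \<open>0 < s\<close> by (simp add: c_def abs_divide s_def)
  have bound: "\<bar>f j\<bar> * \<epsilon> - s * \<epsilon> / 4 \<le> 2 * norm (\<Sum>i<q. f i *\<^sub>R w i)" if "Suc j \<le> q" for q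
  proof -
    have "\<bar>c j\<bar> * \<epsilon> \<le> 2 * norm (\<Sum>i<q. c i *\<^sub>R w i) + \<epsilon> / 4"
      using coefficient_le_norm_partial_sum[OF w almost c] that by simp
    moreover have "(\<Sum>i<q. c i *\<^sub>R w i) = (1 / s) *\<^sub>R (\<Sum>i<q. f i *\<^sub>R w i)"
      by (simp add: c_def scaleR_sum_right)
    ultimately have "\<bar>f j\<bar> / s * \<epsilon> \<le> 2 * (norm (\<Sum>i<q. f i *\<^sub>R w i) / s) + \<epsilon> / 4"
      using \<open>0 < s\<close> by (simp add: c_def abs_divide)
    then show ?thesis
      using \<open>0 < s\<close> by (simp add: field_simps)
  qed
  have lim: "(\<lambda>q. 2 * norm (\<Sum>i<q. f i *\<^sub>R w i)) \<longlonglongrightarrow> 2 * norm (\<Sum>i. f i *\<^sub>R w i)"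
    using \<open>f \<longlonglongrightarrow> 0\<close>
    by (intro tendsto_mult_left tendsto_norm summable_LIMSEQ summable_scaleR_bounded_subsums[where w=w and C=C, OF C])
  have "\<bar>f j\<bar> * \<epsilon> - s * \<epsilon> / 4 \<le> 2 * norm (\<Sum>i. f i *\<^sub>R w i)"
    by (rule Lim_bounded2[OF lim, of "Suc j"]) (use bound in auto)
  moreover have "s / 2 * \<epsilon> < \<bar>f j\<bar> * \<epsilon>"
    using j \<open>0 < \<epsilon>\<close> by (simp add: mult_strict_right_mono)
  ultimately show ?thesis
    by (simp add: s_def algebra_simps)
qed simp

lemma contains_c0_if_almost_norm_increasing:
  fixes w :: "nat \<Rightarrow> 'a::banach"
  assumes C: "\<And>K. finite K \<Longrightarrow> norm (sum w K) \<le> C" and "0 < \<epsilon>"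
    and w: "\<And>k. \<epsilon> \<le> norm (w k)"
    and almost: "\<And>c p q. \<forall>i. \<bar>c i\<bar> \<le> 1 \<Longrightarrow> p \<le> q \<Longrightarrow>
      norm (\<Sum>i<p. c i *\<^sub>R w i) \<le> norm (\<Sum>i<q. c i *\<^sub>R w i) + \<epsilon> / 8"
  shows "contains_c0 TYPE('a)"
proof -
  have "0 \<le> C"
    using C[of "{}"] by simp
  define T where "T f = (\<Sum>i. f i *\<^sub>R w i)" for f :: "nat \<Rightarrow> real"
  have summable: "summable (\<lambda>i. f i *\<^sub>R w i)" if "f \<in> c0" for f
  proof -
    have "f \<longlonglongrightarrow> 0"
      using that by (simp add: c0_def)
    then show ?thesis
      by (intro summable_scaleR_bounded_subsums[where w=w and C=C, OF C])
  qed
  have "T (\<lambda>n. a * f n + b * g n) = a *\<^sub>R T f + b *\<^sub>R T g" if "f \<in> c0" "g \<in> c0" for f g a b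
  proof -
    note sf = summable[OF that(1)] and sg = summable[OF that(2)]
    have "(\<lambda>i. (a * f i + b * g i) *\<^sub>R w i) = (\<lambda>i. a *\<^sub>R (f i *\<^sub>R w i) + b *\<^sub>R (g i *\<^sub>R w i))"
      by (simp add: algebra_simps)
    then have "T (\<lambda>n. a * f n + b * g n) = (\<Sum>i. a *\<^sub>R (f i *\<^sub>R w i) + b *\<^sub>R (g i *\<^sub>R w i))"
      by (simp add: T_def)
    also have "\<dots> = (\<Sum>i. a *\<^sub>R (f i *\<^sub>R w i)) + (\<Sum>i. b *\<^sub>R (g i *\<^sub>R w i))"
      by (rule suminf_add[symmetric]) (intro summable_scaleR_right sf, intro summable_scaleR_right sg)
    also have "\<dots> = a *\<^sub>R T f + b *\<^sub>R T g"
      unfolding T_def using suminf_scaleR_right[OF sf, of a] suminf_scaleR_right[OF sg, of b] by simp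
    finally show ?thesis .
  qed
  moreover have "\<epsilon> / 8 * sup_norm f \<le> norm (T f) \<and> norm (T f) \<le> (2 * C + 1) * sup_norm f"
    if "f \<in> c0" for f
  proof
    show "\<epsilon> / 8 * sup_norm f \<le> norm (T f)"
      unfolding T_def by (rule sup_norm_le_norm_suminf_scaleR[OF C \<open>0 < \<epsilon>\<close> w almost that])
    have "norm (T f) \<le> 2 * C * sup_norm f"
      unfolding T_def by (rule norm_suminf_scaleR_le_sup_norm[where w=w and C=C, OF C that])
    then show "norm (T f) \<le> (2 * C + 1) * sup_norm f"
      using sup_norm_nonneg[OF that] by (simp add: algebra_simps)
  qed
  ultimately show ?thesis
    unfolding contains_c0_def using \<open>0 < \<epsilon>\<close> \<open>0 \<le> C\<close>
    by (intro exI[of _ T] exI[of _ "\<epsilon> / 8"] exI[of _ "2 * C + 1"]) auto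
qed

lemma le_add_sum_telescope:
  fixes a \<eta> :: "nat \<Rightarrow> real"
  assumes step: "\<And>j. a j \<le> a (Suc j) + \<eta> j" and "p \<le> q"
  shows "a p \<le> a q + (\<Sum>j\<in>{p..<q}. \<eta> j)"
  using \<open>p \<le> q\<close>
proof (induction q rule: dec_induct)
  case (step q)
  then show ?case
    using assms(1)[of q] by simp
qed simp

lemma sum_power_half: "(\<Sum>j<q. (1/2::real) ^ Suc j) = 1 - (1/2) ^ q"
  by (induction q) (simp_all add: algebra_simps)

theorem bounded_subsums_imp_contains_c0:
  fixes x :: "nat \<Rightarrow> 'a::banach"
  assumes "\<not> unconditionally_convergent x" and C: "\<And>F. finite F \<Longrightarrow> norm (sum x F) \<le> C"
  shows "contains_c0 TYPE('a)"
proof -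
  obtain \<epsilon> where \<epsilon>: "0 < \<epsilon>" "\<And>N. \<exists>F. finite F \<and> F \<subseteq> {N..} \<and> \<epsilon> \<le> norm (sum x F)"
    using not_unconditionally_convergent_tail_sums[OF assms(1)] by blast
  obtain y :: "nat \<Rightarrow> 'a" where y: "\<And>k. \<epsilon> \<le> norm (y k)" "\<And>K. finite K \<Longrightarrow> norm (sum y K) \<le> C"
    using disjoint_block_sums[where x=x and \<epsilon>=\<epsilon> and C=C, OF \<epsilon>(2) C] by blast
  define \<eta> where "\<eta> j = \<epsilon> / 8 * (1/2) ^ Suc j" for j
  have "0 < \<eta> j" for j
    using \<open>0 < \<epsilon>\<close> by (simp add: \<eta>_def)
  then obtain ks where ks: "strict_mono ks"
    "\<And>c j. \<forall>i. \<bar>c i\<bar> \<le> 1 \<Longrightarrow>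
      norm (\<Sum>i<j. c i *\<^sub>R y (ks i)) \<le> norm (\<Sum>i<Suc j. c i *\<^sub>R y (ks i)) + \<eta> j"
    using almost_norm_increasing_subsequence[where y=y and C=C and \<eta>=\<eta>, OF y(2)] by blast
  define w where "w k = y (ks k)" for k
  have "norm (sum w K) \<le> C" if "finite K" for K
  proof -
    have "sum w K = sum y (ks ` K)"
      using strict_mono_imp_inj_on[OF ks(1)] by (simp add: w_def sum.reindex inj_on_subset)
    then show ?thesis
      using y(2) that by simp
  qed
  moreover have "\<epsilon> \<le> norm (w k)" for k
    using y(1) by (simp add: w_def)
  moreover have "norm (\<Sum>i<p. c i *\<^sub>R w i) \<le> norm (\<Sum>i<q. c i *\<^sub>R w i) + \<epsilon> / 8"
    if "\<forall>i. \<bar>c i\<bar> \<le> 1" "p \<le> q" for c p q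
  proof -
    have "(\<Sum>j\<in>{p..<q}. \<eta> j) \<le> (\<Sum>j<q. \<eta> j)"
      using \<open>\<And>j. 0 < \<eta> j\<close> by (intro sum_mono2) (auto intro: less_imp_le)
    also have "\<dots> = \<epsilon> / 8 * (\<Sum>j<q. (1/2) ^ Suc j)"
      by (simp add: \<eta>_def sum_distrib_left)
    also have "\<dots> = \<epsilon> / 8 * (1 - (1/2) ^ q)"
      by (simp only: sum_power_half)
    also have "\<dots> \<le> \<epsilon> / 8"
      using \<open>0 < \<epsilon>\<close> by simp
    finally show ?thesis
      using le_add_sum_telescope[of "\<lambda>j. norm (\<Sum>i<j. c i *\<^sub>R w i)" \<eta> p q] ks(2)[OF that(1)] that(2)
      by (simp add: w_def)
  qed
  ultimately show ?thesis
    by (rule contains_c0_if_almost_norm_increasing[OF _ \<open>0 < \<epsilon>\<close>])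
qed

lemma unbounded_tail_sums:
  fixes x :: "nat \<Rightarrow> 'a::banach"
  assumes "\<not> contains_c0 TYPE('a)" "\<not> unconditionally_convergent x"
  shows "\<exists>F. finite F \<and> F \<subseteq> {N..} \<and> C < norm (sum x F)"
proof -
  \<comment> \<open>otherwise all finite subsums are bounded by C plus the norms of the first N terms\<close>
  define D where "D = C + (\<Sum>i<N. norm (x i))"
  have "\<not> (\<forall>F. finite F \<longrightarrow> norm (sum x F) \<le> D)"
  proof
    assume "\<forall>F. finite F \<longrightarrow> norm (sum x F) \<le> D"
    then have "contains_c0 TYPE('a)"
      using bounded_subsums_imp_contains_c0[OF assms(2), of D] by blast
    with assms(1) show False
      by contradiction
  qed
  then obtain G where G: "finite G" "D < norm (sum x G)"
    by (auto simp: not_le)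
  have "sum x G = sum x (G \<inter> {..<N}) + sum x (G - {..<N})"
    by (rule sum.Int_Diff[OF G(1)])
  then have "norm (sum x G) \<le> norm (sum x (G \<inter> {..<N})) + norm (sum x (G - {..<N}))"
    using norm_triangle_ineq[of "sum x (G \<inter> {..<N})" "sum x (G - {..<N})"] by simp
  moreover have "norm (sum x (G \<inter> {..<N})) \<le> (\<Sum>i\<in>G \<inter> {..<N}. norm (x i))"
    by (rule norm_sum)
  moreover have "(\<Sum>i\<in>G \<inter> {..<N}. norm (x i)) \<le> (\<Sum>i<N. norm (x i))"
    by (rule sum_mono2) auto
  ultimately have "C < norm (sum x (G - {..<N}))"
    using G(2) by (simp add: D_def)
  moreover have "finite (G - {..<N})" "G - {..<N} \<subseteq> {N..}"
    using G(1) by auto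
  ultimately show ?thesis
    by blast
qed

lemma contains_c0_imp_bounded_subsums_not_unconditionally_convergent:
  assumes "contains_c0 TYPE('a::banach)"
  shows "\<exists>x :: nat \<Rightarrow> 'a. \<not> unconditionally_convergent x \<and> (\<exists>M. \<forall>F. finite F \<longrightarrow> norm (sum x F) \<le> M)"
proof -
  obtain T :: "(nat \<Rightarrow> real) \<Rightarrow> 'a" and m M where mM: "0 < m" "0 < M"
    and lin: "\<forall>f\<in>c0. \<forall>g\<in>c0. \<forall>a b. T (\<lambda>n. a * f n + b * g n) = a *\<^sub>R T f + b *\<^sub>R T g"
    and bnd: "\<forall>f\<in>c0. m * sup_norm f \<le> norm (T f) \<and> norm (T f) \<le> M * sup_norm f"
    using assms unfolding contains_c0_def by blast
  \<comment> \<open>x is the image of the unit vector basis of c0\<close>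
  define ind where "ind S = (\<lambda>i. if i \<in> S then 1 else (0::real))" for S :: "nat set"
  have ind_c0: "ind S \<in> c0" if S: "finite S" for S
  proof -
    obtain N where "S \<subseteq> {..<N}"
      using finite_nat_bounded[OF S] by blast
    then have "eventually (\<lambda>i. ind S i = 0) sequentially"
      unfolding eventually_sequentially ind_def by (intro exI[of _ N]) auto
    then show ?thesis
      unfolding c0_def by (simp add: tendsto_eventually)
  qed
  have "T (\<lambda>n. 0 * ind {} n + 0 * ind {} n) = 0 *\<^sub>R T (ind {}) + 0 *\<^sub>R T (ind {})"
    using lin ind_c0[of "{}"] by blast
  then have T_zero: "T (\<lambda>n. 0) = 0"
    by simp
  have T_ind: "T (ind S) = (\<Sum>i\<in>S. T (ind {i}))" if "finite S" for S
    using that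
  proof (induction S rule: finite_induct)
    case empty
    then show ?case
      using T_zero by (simp add: ind_def)
  next
    case (insert i S)
    have "ind (insert i S) = (\<lambda>n. 1 * ind {i} n + 1 * ind S n)"
      using insert.hyps(2) by (auto simp: ind_def fun_eq_iff)
    moreover have "T (\<lambda>n. 1 * ind {i} n + 1 * ind S n) = 1 *\<^sub>R T (ind {i}) + 1 *\<^sub>R T (ind S)"
      using lin ind_c0[of "{i}"] ind_c0[OF insert.hyps(1)] by blast
    ultimately have "T (ind (insert i S)) = T (ind {i}) + T (ind S)"
      by simp
    then show ?case
      using insert by simp
  qed
  define x where "x = (\<lambda>i. T (ind {i}))"
  have "norm (sum x F) \<le> M" if "finite F" for F
  proof -
    have "sum x F = T (ind F)"
      using T_ind[OF that] by (simp add: x_def)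
    moreover have "norm (T (ind F)) \<le> M * sup_norm (ind F)"
      using bnd ind_c0[OF that] by blast
    ultimately have "norm (sum x F) \<le> M * sup_norm (ind F)"
      by simp
    also have "\<dots> \<le> M"
      using mM(2) sup_norm_le[of "ind F" 1] by (simp add: ind_def)
    finally show ?thesis .
  qed
  moreover have "\<not> unconditionally_convergent x"
  proof
    assume "unconditionally_convergent x"
    then have "summable (x \<circ> id)"
      unfolding unconditionally_convergent_def using bij_id by blast
    then have "(\<lambda>n. norm (x n)) \<longlonglongrightarrow> 0"
      by (simp add: summable_LIMSEQ_zero tendsto_norm_zero)
    then have "eventually (\<lambda>n. norm (x n) < m) sequentially"
      using mM(1) by (simp add: order_tendsto_iff)
    then obtain n where "\<forall>k\<ge>n. norm (x k) < m"
      unfolding eventually_sequentially by blast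
    then have "norm (x n) < m"
      by simp
    moreover have "m \<le> m * sup_norm (ind {n})"
      using abs_le_sup_norm[OF ind_c0, of "{n}" n] mM(1) by (simp add: ind_def)
    moreover have "m * sup_norm (ind {n}) \<le> norm (x n)"
      using bnd ind_c0[of "{n}"] by (simp add: x_def)
    ultimately show False
      by simp
  qed
  ultimately show ?thesis
    by blast
qed

lemma A_set_eq_UNIV:
  fixes x :: "nat \<Rightarrow> 'a::real_normed_vector"
  assumes "{} \<in> I" and M: "\<And>F. finite F \<Longrightarrow> norm (sum x F) \<le> M"
  shows "A_set I x = UNIV"
proof (intro set_eqI iffI)
  fix t :: "nat \<Rightarrow> bool"
  define B where "B = max M 1"
  have "norm (\<Sum>i\<le>n. (if t i then 1 else 0) *\<^sub>R x i) \<le> B" for n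
    using M[of "{i\<in>{..n}. t i}"] by (simp add: sum_if_scaleR_eq_sum_filter B_def)
  then have "{n. B < norm (\<Sum>i\<le>n. (if t i then 1 else 0) *\<^sub>R x i)} = {}"
    by (simp add: not_less)
  moreover have "0 < B"
    by (simp add: B_def)
  ultimately show "t \<in> A_set I x"
    using assms(1) unfolding A_set_def I_bounded_def by auto
qed simp

theorem mainTheorem7:
  fixes I :: "nat set set"
  assumes "ideal_on_nat I"
    and "has_baire_property (ideal_as_cantor I)"
  shows "\<not> contains_c0 TYPE('a::banach) \<longleftrightarrow>
    (\<forall>x::nat \<Rightarrow> 'a. \<not> unconditionally_convergent x \<longrightarrow> meager (A_set I x))"
proof
  assume no_c0: "\<not> contains_c0 TYPE('a)"
  obtain b where b: "strict_mono b" "\<And>X. infinite {k. {b k..<b (Suc k)} \<subseteq> X} \<Longrightarrow> X \<notin> I"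
    using meager_ideal_blocks[OF assms(1) ideal_as_cantor_meager[OF assms]] by blast
  show "\<forall>x::nat \<Rightarrow> 'a. \<not> unconditionally_convergent x \<longrightarrow> meager (A_set I x)"
  proof (intro allI impI)
    fix x :: "nat \<Rightarrow> 'a" assume "\<not> unconditionally_convergent x"
    with no_c0 show "meager (A_set I x)"
      by (intro A_set_meager[where b=b and I=I and x=x, OF b] unbounded_tail_sums)
  qed
next
  assume meager_A: "\<forall>x::nat \<Rightarrow> 'a. \<not> unconditionally_convergent x \<longrightarrow> meager (A_set I x)"
  show "\<not> contains_c0 TYPE('a)"
  proof
    assume "contains_c0 TYPE('a)"
    then obtain x :: "nat \<Rightarrow> 'a" and M
      where "\<not> unconditionally_convergent x" "\<forall>F. finite F \<longrightarrow> norm (sum x F) \<le> M"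
      using contains_c0_imp_bounded_subsums_not_unconditionally_convergent by blast
    moreover have "{} \<in> I"
      using assms(1) by (simp add: ideal_on_nat_def)
    ultimately have "A_set I x = UNIV" "meager (A_set I x)"
      using meager_A A_set_eq_UNIV[of I x M] by auto
    then show False
      using meager_Cantor_interior_empty[of UNIV] by simp
  qed
qed

end
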